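(* Let $n,d\ge1$ and $\epsilon_i>0$. Consider datasets of voter $i$ of the form $D_i=\{\langle X_1,Z_1\rangle,\dots,\langle X_n,Z_n\rangle\}$ with $X_j,Z_j\in\mathbb{R}^d$, $\|X_j\|_2\le 1/2$, $\|Z_j\|_2\le 1/2$, and set $V_j=X_j-Z_j$. Define the approximate objective $$\hat f_{D_i}(\boldsymbol\beta)=\sum_{j=1}^n\sum_{k=0}^{2}\frac{f_1^{(k)}(0)}{k!}(\boldsymbol\beta^\top V_j)^k=\sum_{j=1}^n\Big(\ln\tfrac12+\sqrt{2/\pi}\,\boldsymbol\beta^\top V_j-\tfrac1\pi(\boldsymbol\beta^\top V_j)^2\Big),$$ where $f_1(z)=\ln\Phi(z)$ and $\Phi$ is the standard normal CDF. Write $\hat f_{D_i}(\boldsymbol\beta)=\sum_{w=0}^{2}\sum_{\phi\in\Psi_w}\big(\sum_{j=1}^n\lambda_{\phi,V_j}\big)\phi(\boldsymbol\beta)$, where $\Psi_w$ is the set of monomials $\beta[1]^{c_1}\cdots\beta[d]^{c_d}$ with $c_1+\dots+c_d=w$ and $\lambda_{\phi,V_j}$ is the coefficient of $\phi$ in the $j$-th summand. Let $\Delta_{\mathrm{upper}}=2\sqrt{2d/\pi}+2d/\pi$. Consider the randomized algorithm (Algorithm 3) which, for each $w\in\{0,1,2\}$ and each $\phi\in\Psi_w$, computes $\lambda_\phi=\sum_{j=1}^n\lambda_{\phi,V_j}+\eta_\phi$ with the $\eta_\phi$ independent zero-mean Laplace variables of scale $\Delta_{\mathrm{upper}}/\epsilon_i$,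 forms $f^*_{D_i}(\boldsymbol\beta)=\sum_{w=0}^2\sum_{\phi\in\Psi_w}\lambda_\phi\,\phi(\boldsymbol\beta)$, and outputs $\boldsymbol\beta_i^*\in\operatorname*{argmax}_{\boldsymbol\beta}f^*_{D_i}(\boldsymbol\beta)$ (computed from the noisy coefficients alone). Then this algorithm satisfies $\epsilon_i$-differential privacy in the record-level distributed sense (RLDP): for any two such datasets $D_i,D_i'$ of $n$ records differing in exactly one record and any measurable set $\mathcal{Y}$ of outputs, $\Pr[\boldsymbol\beta_i^*(D_i)\in\mathcal{Y}]\le e^{\epsilon_i}\Pr[\boldsymbol\beta_i^*(D_i')\in\mathcal{Y}]$.
   Context: The Laplace distribution with scale $\lambda$ has density $\frac{1}{2\lambda}e^{-|x|/\lambda}$. $\beta[k]$ denotes the $k$-th coordinate of $\boldsymbol\beta\in\mathbb{R}^d$. *)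

theory Defs
  imports "HOL-Probability.Probability"
begin

definition laplace_density :: "real \<Rightarrow> real \<Rightarrow> real" where
  "laplace_density b x = exp (- \<bar>x\<bar> / b) / (2 * b)"

definition laplace_measure :: "real \<Rightarrow> real measure" where
  "laplace_measure b = density lborel (\<lambda>x. ennreal (laplace_density b x))"

text \<open>Monomials of total degree w in beta[1..d]: exponent vectors c with sum of c = w.\<close>
definition Psi :: "nat \<Rightarrow> ('d::finite \<Rightarrow> nat) set" where
  "Psi w = {c. (\<Sum>k\<in>UNIV. c k) = w}"

definition Psi_all :: "('d::finite \<Rightarrow> nat) set" where
  "Psi_all = Psi 0 \<union> Psi 1 \<union> Psi 2"

definition monomial_eval :: "('d::finite \<Rightarrow> nat) \<Rightarrow> real^'d \<Rightarrow> real" where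
  "monomial_eval c \<beta> = (\<Prod>k\<in>UNIV. (\<beta> $ k) ^ c k)"

text \<open>Taylor coefficients of f1(z) = ln Phi(z) at 0 divided by k!:
  ln(1/2), sqrt(2/pi), -1/pi.\<close>
definition taylor_coeff :: "nat \<Rightarrow> real" where
  "taylor_coeff w = (if w = 0 then ln (1/2) else if w = 1 then sqrt (2/pi)
                     else if w = 2 then - 1/pi else 0)"

text \<open>lambda_{phi,V}: coefficient of monomial phi = beta^c in
  ln(1/2) + sqrt(2/pi) (beta.V) - (1/pi) (beta.V)^2, via the multinomial theorem.\<close>
definition coef :: "real^'d \<Rightarrow> ('d::finite \<Rightarrow> nat) \<Rightarrow> real" where
  "coef V c = (let w = (\<Sum>k\<in>UNIV. c k) in
      taylor_coeff w * (fact w / (\<Prod>k\<in>UNIV. fact (c k))) * (\<Prod>k\<in>UNIV. (V $ k) ^ c k))"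

definition noisy_objective :: "(('d::finite \<Rightarrow> nat) \<Rightarrow> real) \<Rightarrow> real^'d \<Rightarrow> real" where
  "noisy_objective lam \<beta> = (\<Sum>c\<in>Psi_all. lam c * monomial_eval c \<beta>)"

definition Delta_upper :: "nat \<Rightarrow> real" where
  "Delta_upper d = 2 * sqrt (2 * real d / pi) + 2 * real d / pi"

text \<open>Output distribution of Algorithm 3 on dataset D (records D j = (X_j, Z_j), j < n),
  with selection rule sel mapping noisy coefficients to a maximiser.\<close>
definition algorithm3 ::
  "real \<Rightarrow> nat \<Rightarrow> (nat \<Rightarrow> (real^'d) \<times> (real^'d)) \<Rightarrow>
   ((('d::finite \<Rightarrow> nat) \<Rightarrow> real) \<Rightarrow> real^'d) \<Rightarrow> (real^'d) measure" where
  "algorithm3 eps n D sel =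
     distr (PiM Psi_all (\<lambda>_. laplace_measure (Delta_upper CARD('d) / eps))) borel
       (\<lambda>\<eta>. sel (\<lambda>c\<in>Psi_all. (\<Sum>j<n. coef (fst (D j) - snd (D j)) c) + \<eta> c))"

end

theory Submission
  imports Defs
begin

(* Algorithm 3 is the Laplace mechanism followed by post-processing. Adding i.i.d. Laplace noise
   of scale b to a coefficient vector a gives the density prod_c exp (-|x c - a c| / b) / (2b),
   which moving a to a' changes by a factor of at most exp (sum_c |a c - a' c| / b). Neighbouring
   datasets differ in one record, so a - a' is the difference of the coefficient vectors of two
   single records V = X - Z and V' with |V|, |V'| <= 1. The constant coefficients agree, the
   linear ones differ in l1-norm by at most sqrt (2/pi) (|V|_1 + |V'|_1) and the quadratic ones by
   (|V|_1^2 + |V'|_1^2) / pi; with |V|_1 <= sqrt d |V|_2 this is at most Delta_upper d = b * eps. *)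

section \<open>The Laplace mechanism\<close>

lemma laplace_density_nonneg: "b > 0 \<Longrightarrow> 0 \<le> laplace_density b x"
  unfolding laplace_density_def by simp

lemma borel_measurable_laplace_density[measurable]:
  "laplace_density b \<in> borel_measurable borel"
  unfolding laplace_density_def by measurable

lemma laplace_density_shift_le:
  assumes "b > 0"
  shows "laplace_density b (y - t) \<le> exp (\<bar>t - t'\<bar> / b) * laplace_density b (y - t')"
proof -
  have "- \<bar>y - t\<bar> / b \<le> \<bar>t - t'\<bar> / b + - \<bar>y - t'\<bar> / b"
    using assms by (simp add: field_simps)
  then have "exp (- \<bar>y - t\<bar> / b) \<le> exp (\<bar>t - t'\<bar> / b) * exp (- \<bar>y - t'\<bar> / b)"
    by (simp flip: exp_add)
  then show ?thesis
    using assms unfolding laplace_density_def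
    by (simp add: divide_right_mono mult.assoc[symmetric] del: exp_le_cancel_iff)
qed

lemma prod_laplace_density_shift_le:
  assumes "finite I" and "b > 0" and "(\<Sum>c\<in>I. \<bar>a c - a' c\<bar>) \<le> b * eps"
  shows "(\<Prod>c\<in>I. laplace_density b (x c - a c))
       \<le> exp eps * (\<Prod>c\<in>I. laplace_density b (x c - a' c))"
proof -
  have "(\<Prod>c\<in>I. laplace_density b (x c - a c))
      \<le> (\<Prod>c\<in>I. exp (\<bar>a c - a' c\<bar> / b) * laplace_density b (x c - a' c))"
    using assms(2) by (intro prod_mono conjI laplace_density_nonneg laplace_density_shift_le)
  also have "\<dots> = exp ((\<Sum>c\<in>I. \<bar>a c - a' c\<bar>) / b) * (\<Prod>c\<in>I. laplace_density b (x c - a' c))"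
    using assms(1) by (simp add: prod.distrib exp_sum sum_divide_distrib)
  also have "\<dots> \<le> exp eps * (\<Prod>c\<in>I. laplace_density b (x c - a' c))"
    using assms(2,3) by (intro mult_right_mono prod_nonneg laplace_density_nonneg)
      (auto simp: divide_le_eq mult.commute)
  finally show ?thesis .
qed

lemma nn_integral_laplace_density:
  assumes b: "b > 0"
  shows "(\<integral>\<^sup>+x. ennreal (laplace_density b x) \<partial>lborel) = 1"
proof -
  let ?e = "exponential_density (1/b)"
  have e: "(\<integral>\<^sup>+x. ennreal (?e x) \<partial>lborel) = 1"
  proof -
    interpret prob_space "density lborel ?e"
      using prob_space_exponential_density[of "1/b"] b by simp
    show ?thesis
      using emeasure_space_1 by (simp add: emeasure_density)
  qed
  have e_reflected: "(\<integral>\<^sup>+x. ennreal (?e (-x)) \<partial>lborel) = 1"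
    using nn_integral_real_affine[of "\<lambda>x. ennreal (?e x)" "-1" 0] e by simp
  \<comment> \<open>The two sides differ only at 0, where the exponential density jumps.\<close>
  have "AE x in lborel. ennreal (laplace_density b x)
          = ennreal (1/2) * ennreal (?e x) + ennreal (1/2) * ennreal (?e (-x))"
    using AE_lborel_singleton[of "0::real"]
  proof eventually_elim
    case (elim x)
    then have "laplace_density b x = 1/2 * ?e x + 1/2 * ?e (-x)"
      using b by (auto simp: laplace_density_def exponential_density_def field_simps abs_if)
    moreover have "?e x \<ge> 0" "?e (-x) \<ge> 0"
      using b by (auto simp: exponential_density_def)
    ultimately show ?case
      using ennreal_plus[of "1/2 * ?e x" "1/2 * ?e (-x)"] ennreal_mult[of "1/2" "?e x"]
        ennreal_mult[of "1/2" "?e (-x)"]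
      by simp
  qed
  then have "(\<integral>\<^sup>+x. ennreal (laplace_density b x) \<partial>lborel)
      = (\<integral>\<^sup>+x. ennreal (1/2) * ennreal (?e x) + ennreal (1/2) * ennreal (?e (-x)) \<partial>lborel)"
    by (rule nn_integral_cong_AE)
  also have "\<dots> = ennreal (1/2) * (\<integral>\<^sup>+x. ennreal (?e x) \<partial>lborel)
      + ennreal (1/2) * (\<integral>\<^sup>+x. ennreal (?e (-x)) \<partial>lborel)"
    by (simp add: nn_integral_add nn_integral_cmult)
  also have "\<dots> = 1"
    using e e_reflected ennreal_plus[of "1/2" "1/2"] by simp
  finally show ?thesis .
qed

lemma prob_space_laplace_measure: "b > 0 \<Longrightarrow> prob_space (laplace_measure b)"
  unfolding laplace_measure_def
  by (rule prob_spaceI) (simp add: emeasure_density nn_integral_laplace_density)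

lemma sets_laplace_measure[simp, measurable_cong]: "sets (laplace_measure b) = sets borel"
  by (simp add: laplace_measure_def)

lemma distr_plus_laplace_measure:
  "distr (laplace_measure b) borel ((+) t) = density lborel (\<lambda>y. laplace_density b (y - t))"
proof -
  have "density lborel (\<lambda>y. ennreal (laplace_density b (y - t)))
      = density (distr lborel borel ((+) t)) (\<lambda>y. ennreal (laplace_density b (y - t)))"
    by (simp add: lborel_distr_plus)
  also have "\<dots> = distr (density lborel (\<lambda>x. laplace_density b (t + x - t))) borel ((+) t)"
    by (rule density_distr) simp_all
  finally show ?thesis
    by (simp add: laplace_measure_def)
qed

lemma indicator_PiE_eq_prod:
  assumes "finite I" and "x \<in> extensional I"
  shows "indicator (PiE I A) x = (\<Prod>i\<in>I. indicator (A i) (x i) :: 'b::comm_semiring_1)"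
proof (cases "\<forall>i\<in>I. x i \<in> A i")
  case True
  then show ?thesis
    using assms(2) by (simp add: PiE_iff)
next
  case False
  then obtain i where i: "i \<in> I" "x i \<notin> A i"
    by auto
  then have "(\<Prod>i\<in>I. indicator (A i) (x i) :: 'b) = 0"
    using assms(1) by (intro prod_zero bexI[of _ i]) simp_all
  then show ?thesis
    using False by (auto simp: PiE_iff)
qed

lemma distr_PiM_componentwise:
  assumes "finite I" and "product_prob_space M"
    and f: "\<And>i. f i \<in> measurable (M i) (N i)"
  shows "distr (PiM I M) (PiM I N) (\<lambda>x. \<lambda>i\<in>I. f i (x i)) = PiM I (\<lambda>i. distr (M i) (N i) (f i))"
proof -
  interpret M: product_prob_space M by fact
  interpret MN: product_prob_space "\<lambda>i. distr (M i) (N i) (f i)"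
    using f by (intro product_prob_spaceI M.M.prob_space_distr)
  have f_PiM: "(\<lambda>x. \<lambda>i\<in>I. f i (x i)) \<in> measurable (PiM I M) (PiM I N)"
    using f by (intro measurable_restrict measurable_compose[OF measurable_component_singleton])
  show ?thesis
  proof (rule MN.PiM_eqI[OF assms(1)])
    show "sets (distr (PiM I M) (PiM I N) (\<lambda>x. \<lambda>i\<in>I. f i (x i)))
        = sets (PiM I (\<lambda>i. distr (M i) (N i) (f i)))"
      by (simp cong: sets_PiM_cong)
  next
    fix A assume A: "\<And>i. i \<in> I \<Longrightarrow> A i \<in> sets (distr (M i) (N i) (f i))"
    have "(\<lambda>x. \<lambda>i\<in>I. f i (x i)) -` PiE I A \<inter> space (PiM I M)
        = PiE I (\<lambda>i. f i -` A i \<inter> space (M i))"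
      by (auto simp: space_PiM PiE_iff)
    moreover have "PiE I A \<in> sets (PiM I N)"
      using A by (intro sets_PiM_I_finite[OF assms(1)]) auto
    ultimately have "emeasure (distr (PiM I M) (PiM I N) (\<lambda>x. \<lambda>i\<in>I. f i (x i))) (PiE I A)
        = emeasure (PiM I M) (PiE I (\<lambda>i. f i -` A i \<inter> space (M i)))"
      by (simp add: emeasure_distr[OF f_PiM])
    also have "\<dots> = (\<Prod>i\<in>I. emeasure (M i) (f i -` A i \<inter> space (M i)))"
      using A f by (intro M.emeasure_PiM assms(1)) (auto simp: measurable_sets)
    also have "\<dots> = (\<Prod>i\<in>I. emeasure (distr (M i) (N i) (f i)) (A i))"
      using A f by (intro prod.cong refl emeasure_distr[symmetric]) auto
    finally show "emeasure (distr (PiM I M) (PiM I N) (\<lambda>x. \<lambda>i\<in>I. f i (x i))) (PiE I A)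
        = (\<Prod>i\<in>I. emeasure (distr (M i) (N i) (f i)) (A i))" .
  qed
qed

lemma PiM_density:
  assumes I: "finite I" and "product_sigma_finite M"
    and "\<And>i. sigma_finite_measure (density (M i) (f i))"
    and f: "\<And>i. i \<in> I \<Longrightarrow> f i \<in> borel_measurable (M i)"
  shows "PiM I (\<lambda>i. density (M i) (f i)) = density (PiM I M) (\<lambda>x. \<Prod>i\<in>I. f i (x i))"
proof -
  interpret M: product_sigma_finite M by fact
  interpret Mf: product_sigma_finite "\<lambda>i. density (M i) (f i)"
    using assms(3) by (simp add: product_sigma_finite_def)
  have prod_f: "(\<lambda>x. \<Prod>i\<in>I. f i (x i)) \<in> borel_measurable (PiM I M)"
    using f by (intro borel_measurable_prod_ennreal measurable_compose[OF measurable_component_singleton])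
  show ?thesis
  proof (rule Mf.PiM_eqI[OF I, symmetric])
    show "sets (density (PiM I M) (\<lambda>x. \<Prod>i\<in>I. f i (x i))) = sets (PiM I (\<lambda>i. density (M i) (f i)))"
      by (simp cong: sets_PiM_cong)
  next
    fix A assume A: "\<And>i. i \<in> I \<Longrightarrow> A i \<in> sets (density (M i) (f i))"
    have "emeasure (density (PiM I M) (\<lambda>x. \<Prod>i\<in>I. f i (x i))) (PiE I A)
        = (\<integral>\<^sup>+x. (\<Prod>i\<in>I. f i (x i)) * indicator (PiE I A) x \<partial>PiM I M)"
      using A by (intro emeasure_density prod_f sets_PiM_I_finite I) auto
    also have "\<dots> = (\<integral>\<^sup>+x. (\<Prod>i\<in>I. f i (x i) * indicator (A i) (x i)) \<partial>PiM I M)"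
    proof (rule nn_integral_cong)
      fix x assume "x \<in> space (PiM I M)"
      then have "x \<in> extensional I"
        by (simp add: space_PiM PiE_def)
      then show "(\<Prod>i\<in>I. f i (x i)) * indicator (PiE I A) x = (\<Prod>i\<in>I. f i (x i) * indicator (A i) (x i))"
        by (simp add: indicator_PiE_eq_prod[OF I] prod.distrib)
    qed
    also have "\<dots> = (\<Prod>i\<in>I. \<integral>\<^sup>+y. f i y * indicator (A i) y \<partial>M i)"
      using A f by (intro M.product_nn_integral_prod I) auto
    also have "\<dots> = (\<Prod>i\<in>I. emeasure (density (M i) (f i)) (A i))"
      using A f by (intro prod.cong refl emeasure_density[symmetric]) auto
    finally show "emeasure (density (PiM I M) (\<lambda>x. \<Prod>i\<in>I. f i (x i))) (PiE I A)
        = (\<Prod>i\<in>I. emeasure (density (M i) (f i)) (A i))" .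
  qed
qed

lemma measurable_PiM_shift:
  assumes "sets M = sets borel"
  shows "(\<lambda>\<eta>. \<lambda>c\<in>I. a c + \<eta> c) \<in> measurable (PiM I (\<lambda>_. M)) (PiM I (\<lambda>_. borel :: real measure))"
  using assms
  by (intro measurable_restrict measurable_compose[OF measurable_component_singleton]) simp_all

lemma distr_PiM_laplace_measure_shift:
  assumes I: "finite I" and b: "b > 0"
  shows "distr (PiM I (\<lambda>_. laplace_measure b)) (PiM I (\<lambda>_. borel)) (\<lambda>\<eta>. \<lambda>c\<in>I. a c + \<eta> c)
       = density (PiM I (\<lambda>_. lborel)) (\<lambda>x. \<Prod>c\<in>I. ennreal (laplace_density b (x c - a c)))"
proof -
  have "product_prob_space (\<lambda>_. laplace_measure b)"
    using b by (intro product_prob_spaceI prob_space_laplace_measure)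
  then have "distr (PiM I (\<lambda>_. laplace_measure b)) (PiM I (\<lambda>_. borel)) (\<lambda>\<eta>. \<lambda>c\<in>I. a c + \<eta> c)
      = PiM I (\<lambda>c. distr (laplace_measure b) borel ((+) (a c)))"
    using distr_PiM_componentwise[OF I, of "\<lambda>_. laplace_measure b" "\<lambda>c. (+) (a c)" "\<lambda>_. borel"]
    by simp
  also have "\<dots> = PiM I (\<lambda>c. density lborel (\<lambda>y. laplace_density b (y - a c)))"
    by (simp add: distr_plus_laplace_measure)
  also have "\<dots> = density (PiM I (\<lambda>_. lborel)) (\<lambda>x. \<Prod>c\<in>I. ennreal (laplace_density b (x c - a c)))"
  proof (rule PiM_density[OF I])
    show "product_sigma_finite (\<lambda>_. lborel :: real measure)"
      by (simp add: product_sigma_finite_def lborel.sigma_finite_measure_axioms)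
    fix c
    have "prob_space (distr (laplace_measure b) borel ((+) (a c)))"
      using b by (intro prob_space.prob_space_distr prob_space_laplace_measure) simp_all
    then show "sigma_finite_measure (density lborel (\<lambda>y. laplace_density b (y - a c)))"
      by (simp add: distr_plus_laplace_measure prob_space_imp_sigma_finite)
  qed simp
  finally show ?thesis .
qed

lemma laplace_mechanism_emeasure_le:
  fixes a a' :: "'i \<Rightarrow> real" and sel :: "('i \<Rightarrow> real) \<Rightarrow> 'o"
  assumes I: "finite I" and b: "b > 0" and sens: "(\<Sum>c\<in>I. \<bar>a c - a' c\<bar>) \<le> b * eps"
    and sel: "sel \<in> measurable (PiM I (\<lambda>_. borel)) N" and Y: "Y \<in> sets N"
  shows "emeasure (distr (PiM I (\<lambda>_. laplace_measure b)) N (\<lambda>\<eta>. sel (\<lambda>c\<in>I. a c + \<eta> c))) Y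
       \<le> exp eps * emeasure (distr (PiM I (\<lambda>_. laplace_measure b)) N (\<lambda>\<eta>. sel (\<lambda>c\<in>I. a' c + \<eta> c))) Y"
proof -
  define g where "g a = (\<lambda>x. \<Prod>c\<in>I. ennreal (laplace_density b (x c - a c)))" for a
  define S where "S = sel -` Y \<inter> space (PiM I (\<lambda>_. borel :: real measure))"
  have sel': "sel \<in> measurable (PiM I (\<lambda>_. lborel)) N"
    using sel by (simp cong: measurable_cong_sets sets_PiM_cong)
  have S: "S \<in> sets (PiM I (\<lambda>_. lborel))"
    using measurable_sets[OF sel Y] unfolding S_def by (simp cong: sets_PiM_cong)
  have g: "g a \<in> borel_measurable (PiM I (\<lambda>_. lborel))" for a
    unfolding g_def
    by (intro borel_measurable_prod_ennreal measurable_compose[OF measurable_component_singleton]) simp_all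
  have emeasure_eq: "emeasure (distr (PiM I (\<lambda>_. laplace_measure b)) N (\<lambda>\<eta>. sel (\<lambda>c\<in>I. a c + \<eta> c))) Y
      = (\<integral>\<^sup>+x. g a x * indicator S x \<partial>PiM I (\<lambda>_. lborel))" for a
  proof -
    have "distr (PiM I (\<lambda>_. laplace_measure b)) N (\<lambda>\<eta>. sel (\<lambda>c\<in>I. a c + \<eta> c))
        = distr (density (PiM I (\<lambda>_. lborel)) (g a)) N sel"
      using distr_distr[OF sel measurable_PiM_shift[OF sets_laplace_measure[of b]]] distr_PiM_laplace_measure_shift[OF I b]
      by (simp add: comp_def g_def)
    then show ?thesis
      using sel' Y S g unfolding S_def
      by (simp add: emeasure_distr emeasure_density space_PiM)
  qed
  have "g a x * indicator S x \<le> exp eps * (g a' x * indicator S x)" for x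
  proof -
    have "g a x = ennreal (\<Prod>c\<in>I. laplace_density b (x c - a c))"
      unfolding g_def using b by (simp add: prod_ennreal laplace_density_nonneg)
    also have "\<dots> \<le> ennreal (exp eps * (\<Prod>c\<in>I. laplace_density b (x c - a' c)))"
      using prod_laplace_density_shift_le[OF I b sens] by (rule ennreal_leI)
    also have "\<dots> = exp eps * g a' x"
      unfolding g_def using b
      by (simp add: ennreal_mult prod_ennreal laplace_density_nonneg prod_nonneg)
    finally show ?thesis
      by (simp add: mult.assoc[symmetric] mult_right_mono)
  qed
  then have "(\<integral>\<^sup>+x. g a x * indicator S x \<partial>PiM I (\<lambda>_. lborel))
      \<le> exp eps * (\<integral>\<^sup>+x. g a' x * indicator S x \<partial>PiM I (\<lambda>_. lborel))"
    using g S by (simp add: nn_integral_mono nn_integral_cmult[symmetric])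
  then show ?thesis
    by (simp only: emeasure_eq)
qed

lemma laplace_mechanism_differentially_private:
  fixes a a' :: "'i \<Rightarrow> real" and sel :: "('i \<Rightarrow> real) \<Rightarrow> 'o"
  assumes I: "finite I" and b: "b > 0" and sens: "(\<Sum>c\<in>I. \<bar>a c - a' c\<bar>) \<le> b * eps"
    and sel: "sel \<in> measurable (PiM I (\<lambda>_. borel)) N" and Y: "Y \<in> sets N"
  shows "measure (distr (PiM I (\<lambda>_. laplace_measure b)) N (\<lambda>\<eta>. sel (\<lambda>c\<in>I. a c + \<eta> c))) Y
       \<le> exp eps * measure (distr (PiM I (\<lambda>_. laplace_measure b)) N (\<lambda>\<eta>. sel (\<lambda>c\<in>I. a' c + \<eta> c))) Y"
proof -
  have emeasure_eq: "emeasure (distr (PiM I (\<lambda>_. laplace_measure b)) N (\<lambda>\<eta>. sel (\<lambda>c\<in>I. a c + \<eta> c))) Y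
      = measure (distr (PiM I (\<lambda>_. laplace_measure b)) N (\<lambda>\<eta>. sel (\<lambda>c\<in>I. a c + \<eta> c))) Y"
    for a :: "'i \<Rightarrow> real"
  proof -
    interpret L: prob_space "PiM I (\<lambda>_. laplace_measure b)"
      using b by (intro prob_space_PiM prob_space_laplace_measure)
    interpret prob_space "distr (PiM I (\<lambda>_. laplace_measure b)) N (\<lambda>\<eta>. sel (\<lambda>c\<in>I. a c + \<eta> c))"
      using measurable_comp[OF measurable_PiM_shift[OF sets_laplace_measure[of b]] sel]
      by (intro L.prob_space_distr) (simp add: comp_def)
    show ?thesis
      by (rule emeasure_eq_measure)
  qed
  show ?thesis
    using laplace_mechanism_emeasure_le[OF assms]
    by (simp add: emeasure_eq ennreal_mult[symmetric] ennreal_le_iff)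
qed

section \<open>Sensitivity of the Taylor coefficients\<close>

lemma finite_Psi: "finite (Psi w :: ('d::finite \<Rightarrow> nat) set)"
proof (rule finite_subset)
  show "Psi w \<subseteq> PiE (UNIV :: 'd set) (\<lambda>_. {..w})"
  proof
    fix c :: "'d \<Rightarrow> nat" assume "c \<in> Psi w"
    then have "c k \<le> w" for k
      using member_le_sum[of k UNIV c] by (simp add: Psi_def)
    then show "c \<in> PiE UNIV (\<lambda>_. {..w})"
      by (simp add: PiE_UNIV_domain)
  qed
qed (simp add: finite_PiE)

lemma sum_Psi_all:
  "(\<Sum>c\<in>Psi_all. g c) = (\<Sum>c\<in>Psi 0. g c) + (\<Sum>c\<in>Psi 1. g c) + (\<Sum>c\<in>(Psi 2 :: ('d::finite \<Rightarrow> nat) set). g c)"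
proof -
  have "Psi 0 \<inter> Psi 1 = ({} :: ('d \<Rightarrow> nat) set)" "(Psi 0 \<union> Psi 1) \<inter> Psi 2 = ({} :: ('d \<Rightarrow> nat) set)"
    by (auto simp: Psi_def)
  then show ?thesis
    unfolding Psi_all_def by (simp add: sum.union_disjoint finite_Psi)
qed

lemma coef_Psi_0: "c \<in> Psi 0 \<Longrightarrow> coef V c = ln (1/2)"
  by (simp add: Psi_def coef_def taylor_coeff_def)

lemma prod_power_indicator_singleton:
  "(\<Prod>k\<in>UNIV. (x k :: 'a::comm_monoid_mult) ^ indicator {j} k) = x (j :: 'd::finite)"
proof -
  have "(\<Prod>k\<in>UNIV. x k ^ indicator {j} k) = (\<Prod>k\<in>UNIV. if k = j then x k else 1)"
    by (intro prod.cong) (auto simp: indicator_def)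
  then show ?thesis
    by (simp add: prod.delta)
qed

lemma Psi_1_eq: "Psi 1 = range (\<lambda>j::'d::finite. indicator {j})"
proof
  show "range (\<lambda>j. indicator {j}) \<subseteq> (Psi 1 :: ('d \<Rightarrow> nat) set)"
    by (auto simp: Psi_def indicator_def)
  show "Psi 1 \<subseteq> range (\<lambda>j::'d. indicator {j})"
  proof
    fix c :: "'d \<Rightarrow> nat" assume "c \<in> Psi 1"
    then have sum_c: "c j + (\<Sum>k\<in>UNIV-{j}. c k) = 1" for j
      by (simp add: Psi_def sum.remove)
    obtain j where "c j \<noteq> 0"
      using sum_c by fastforce
    then have "c j = 1" and "(\<Sum>k\<in>UNIV-{j}. c k) = 0"
      using sum_c[of j] by linarith+
    then have "c = indicator {j}"
      by (auto simp: fun_eq_iff indicator_def sum_eq_0_iff)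
    then show "c \<in> range (\<lambda>j. indicator {j})"
      by simp
  qed
qed

lemma sum_abs_coef_Psi_1: "(\<Sum>c\<in>Psi 1. \<bar>coef V c\<bar>) = sqrt (2/pi) * (\<Sum>k\<in>UNIV. \<bar>V $ k\<bar>)"
proof -
  have inj: "inj (\<lambda>j::'d. indicator {j} :: 'd \<Rightarrow> nat)"
    by (rule injI) (metis indicator_simps(1) indicator_simps(2) singletonD singletonI zero_neq_one)
  have coef_indicator: "coef V (indicator {j}) = sqrt (2/pi) * V $ j" for j
  proof -
    have "(\<Sum>k\<in>UNIV. indicator {j} k) = (1::nat)"
      by (simp add: sum_indicator_eq_card)
    moreover have "(\<Prod>k\<in>UNIV. fact (indicator {j} k) :: real) = 1"
      by (intro prod.neutral) (simp add: indicator_def)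
    ultimately show ?thesis
      by (simp add: coef_def taylor_coeff_def prod_power_indicator_singleton)
  qed
  show ?thesis
    unfolding Psi_1_eq sum.reindex[OF inj]
    by (simp add: coef_indicator abs_mult sum_distrib_left)
qed

definition pair_exponent :: "'d \<Rightarrow> 'd \<Rightarrow> 'd \<Rightarrow> nat" where
  "pair_exponent j l = (\<lambda>i. indicator {j} i + indicator {l} i)"

lemma pair_exponent_eq_iff:
  "pair_exponent p q = pair_exponent j l \<longleftrightarrow> (p = j \<and> q = l) \<or> (p = l \<and> q = j)"
proof
  assume eq: "pair_exponent p q = pair_exponent j l"
  have "p = j \<or> p = l"
    using fun_cong[OF eq, of p] by (auto simp: pair_exponent_def indicator_def of_bool_def split: if_splits)
  moreover have "q = l" if "p = j"
    using fun_cong[OF eq, of q] that by (auto simp: pair_exponent_def indicator_def of_bool_def split: if_splits)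
  moreover have "q = j" if "p = l"
    using fun_cong[OF eq, of q] that by (auto simp: pair_exponent_def indicator_def of_bool_def split: if_splits)
  ultimately show "(p = j \<and> q = l) \<or> (p = l \<and> q = j)"
    by blast
qed (auto simp: pair_exponent_def fun_eq_iff)

lemma Psi_2_eq: "Psi 2 = range (\<lambda>(j, l). pair_exponent j l :: 'd::finite \<Rightarrow> nat)"
proof
  show "range (\<lambda>(j, l). pair_exponent j l) \<subseteq> (Psi 2 :: ('d \<Rightarrow> nat) set)"
    by (auto simp: Psi_def pair_exponent_def sum.distrib sum_indicator_eq_card)
  show "Psi 2 \<subseteq> range (\<lambda>(j, l). pair_exponent j l :: 'd \<Rightarrow> nat)"
  proof
    fix c :: "'d \<Rightarrow> nat" assume "c \<in> Psi 2"
    then have sum_c: "(\<Sum>k\<in>UNIV. c k) = 2"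
      by (simp add: Psi_def)
    then obtain j where "c j \<noteq> 0"
      by fastforce
    then have le: "indicator {j} i \<le> c i" for i
      by (simp add: indicator_def)
    \<comment> \<open>Removing one factor of a quadratic monomial leaves a linear one.\<close>
    have "(\<lambda>i. c i - indicator {j} i) \<in> Psi 1"
      using sum_subtractf_nat[of UNIV "indicator {j}" c] le sum_c by (simp add: Psi_def sum_indicator_eq_card)
    then obtain l where rest: "(\<lambda>i. c i - indicator {j} i) = indicator {l}"
      unfolding Psi_1_eq by blast
    have "c i = indicator {j} i + indicator {l} i" for i
      using le[of i] fun_cong[OF rest, of i] by simp
    then have "c = pair_exponent j l"
      by (simp add: pair_exponent_def fun_eq_iff)
    then show "c \<in> range (\<lambda>(j, l). pair_exponent j l)"
      by (auto intro: image_eqI[of _ _ "(j, l)"])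
  qed
qed

lemma card_pairs_mult_prod_fact_pair_exponent:
  fixes j l :: "'d::finite"
  shows "real (card {(p, q). pair_exponent p q = pair_exponent j l})
     * (\<Prod>k\<in>UNIV. fact (pair_exponent j l k)) = (2 :: real)"
proof (cases "j = l")
  case True
  have "(\<Prod>k\<in>UNIV. fact (pair_exponent j l k) :: real) = (\<Prod>k\<in>UNIV. if k = j then 2 else 1)"
    using True by (intro prod.cong) (auto simp: pair_exponent_def)
  then show ?thesis
    using True by (simp add: pair_exponent_eq_iff prod.delta)
next
  case False
  have "{(p, q). pair_exponent p q = pair_exponent j l} = {(j, l), (l, j)}"
    by (auto simp: pair_exponent_eq_iff)
  moreover have "(\<Prod>k\<in>UNIV. fact (pair_exponent j l k) :: real) = 1"
    using False by (intro prod.neutral) (auto simp: pair_exponent_def indicator_def)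
  ultimately show ?thesis
    using False by simp
qed

lemma sum_abs_coef_Psi_2:
  fixes V :: "real^'d::finite"
  shows "(\<Sum>c\<in>Psi 2. \<bar>coef V c\<bar>) = (\<Sum>k\<in>UNIV. \<bar>V $ k\<bar>)\<^sup>2 / pi"
proof -
  define m :: "'d \<times> 'd \<Rightarrow> 'd \<Rightarrow> nat" where "m = (\<lambda>(j, l). pair_exponent j l)"
  define G where "G c = (\<Prod>k\<in>UNIV. \<bar>V $ k\<bar> ^ c k)" for c :: "'d \<Rightarrow> nat"
  \<comment> \<open>The multinomial coefficient of a quadratic monomial counts the ordered pairs producing it.\<close>
  have "\<bar>coef V c\<bar> = real (card {p. m p = c}) * G c / pi" if "c \<in> Psi 2" for c
  proof -
    obtain j l where c: "c = pair_exponent j l"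
      using \<open>c \<in> Psi 2\<close> by (auto simp: Psi_2_eq)
    have "(\<Sum>k\<in>UNIV. c k) = 2"
      using that by (simp add: Psi_def)
    moreover have "real (card {p. m p = c}) = 2 / (\<Prod>k\<in>UNIV. fact (c k))"
      using card_pairs_mult_prod_fact_pair_exponent[of j l]
      by (simp add: c m_def case_prod_unfold field_simps prod_pos)
    ultimately show ?thesis
      by (simp add: coef_def G_def taylor_coeff_def abs_mult abs_prod power_abs)
  qed
  then have "(\<Sum>c\<in>Psi 2. \<bar>coef V c\<bar>) = (\<Sum>c\<in>Psi 2. \<Sum>p\<in>{p\<in>UNIV. m p = c}. G (m p)) / pi"
    by (simp add: sum_divide_distrib)
  also have "\<dots> = (\<Sum>p\<in>UNIV. G (m p)) / pi"
    by (subst sum.group) (auto simp: finite_Psi Psi_2_eq m_def)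
  also have "(\<Sum>p\<in>UNIV. G (m p)) = (\<Sum>(j, l)\<in>UNIV. \<bar>V $ j\<bar> * \<bar>V $ l\<bar>)"
    by (intro sum.cong refl)
      (auto simp: m_def G_def pair_exponent_def power_add prod.distrib prod_power_indicator_singleton)
  also have "\<dots> = (\<Sum>k\<in>UNIV. \<bar>V $ k\<bar>)\<^sup>2"
    by (simp add: power2_eq_square sum_product sum.cartesian_product flip: UNIV_Times_UNIV)
  finally show ?thesis .
qed

lemma sum_abs_vec_le_sqrt_card_norm:
  "(\<Sum>k\<in>UNIV. \<bar>V $ k\<bar>) \<le> sqrt (real CARD('d::finite)) * norm (V :: real^'d)"
  using L2_set_mult_ineq[of "\<lambda>k. \<bar>V $ k\<bar>" "\<lambda>_. 1" UNIV]
  by (simp add: norm_vec_def L2_set_constant mult.commute)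

lemma sum_abs_coef_diff_le_Delta_upper:
  fixes V V' :: "real^'d::finite"
  assumes "norm V \<le> 1" and "norm V' \<le> 1"
  shows "(\<Sum>c\<in>Psi_all. \<bar>coef V c - coef V' c\<bar>) \<le> Delta_upper CARD('d)"
proof -
  define l1 where "l1 W = (\<Sum>k\<in>UNIV. \<bar>W $ k\<bar>)" for W :: "real^'d"
  have l1_le: "l1 W \<le> sqrt (real CARD('d))" and l1_sq_le: "(l1 W)\<^sup>2 \<le> real CARD('d)"
    if "norm W \<le> 1" for W
  proof -
    show l1_le: "l1 W \<le> sqrt (real CARD('d))"
      using sum_abs_vec_le_sqrt_card_norm[of W] that unfolding l1_def
      by (meson mult_left_le order_trans real_sqrt_ge_zero of_nat_0_le_iff)
    have "(l1 W)\<^sup>2 \<le> (sqrt (real CARD('d)))\<^sup>2"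
      using l1_le by (intro power_mono) (simp_all add: l1_def sum_nonneg)
    then show "(l1 W)\<^sup>2 \<le> real CARD('d)"
      by simp
  qed
  have "(\<Sum>c\<in>Psi_all. \<bar>coef V c - coef V' c\<bar>)
      = (\<Sum>c\<in>Psi 1. \<bar>coef V c - coef V' c\<bar>) + (\<Sum>c\<in>Psi 2. \<bar>coef V c - coef V' c\<bar>)"
    by (simp add: sum_Psi_all coef_Psi_0)
  also have "\<dots> \<le> ((\<Sum>c\<in>Psi 1. \<bar>coef V c\<bar>) + (\<Sum>c\<in>Psi 1. \<bar>coef V' c\<bar>))
      + ((\<Sum>c\<in>Psi 2. \<bar>coef V c\<bar>) + (\<Sum>c\<in>Psi 2. \<bar>coef V' c\<bar>))"
    by (intro add_mono) (simp_all add: sum.distrib[symmetric] sum_mono abs_triangle_ineq4)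
  also have "\<dots> = (sqrt (2/pi) * l1 V + sqrt (2/pi) * l1 V') + ((l1 V)\<^sup>2 / pi + (l1 V')\<^sup>2 / pi)"
    unfolding sum_abs_coef_Psi_1 sum_abs_coef_Psi_2 l1_def ..
  also have "\<dots> \<le> (sqrt (2/pi) * sqrt (real CARD('d)) + sqrt (2/pi) * sqrt (real CARD('d)))
      + (real CARD('d) / pi + real CARD('d) / pi)"
    using assms by (intro add_mono mult_left_mono divide_right_mono l1_le l1_sq_le) simp_all
  also have "\<dots> = Delta_upper CARD('d)"
    by (simp add: Delta_upper_def real_sqrt_mult[symmetric])
  finally show ?thesis .
qed

lemma sum_neighbours_diff:
  fixes n :: nat
  assumes "k < n" and "\<forall>j<n. j \<noteq> k \<longrightarrow> D j = D' j"
  shows "(\<Sum>j<n. g (D j)) - (\<Sum>j<n. g (D' j)) = g (D k) - (g (D' k) :: 'a::ab_group_add)"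
proof -
  have "(\<Sum>j<n. g (D j)) = g (D k) + (\<Sum>j\<in>{..<n}-{k}. g (D j))"
    and "(\<Sum>j<n. g (D' j)) = g (D' k) + (\<Sum>j\<in>{..<n}-{k}. g (D' j))"
    using assms(1) by (simp_all add: sum.remove)
  moreover have "(\<Sum>j\<in>{..<n}-{k}. g (D j)) = (\<Sum>j\<in>{..<n}-{k}. g (D' j))"
    using assms(2) by (intro sum.cong) auto
  ultimately show ?thesis
    by (metis add_diff_cancel_right)
qed

theorem theorem5:
  fixes eps :: real and n :: nat
    and D D' :: "nat \<Rightarrow> (real^'d::finite) \<times> (real^'d)"
    and sel :: "(('d \<Rightarrow> nat) \<Rightarrow> real) \<Rightarrow> real^'d"
    and Y :: "(real^'d) set"
  assumes "n \<ge> 1" and "eps > 0"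
    and "\<And>j. j < n \<Longrightarrow> norm (fst (D j)) \<le> 1/2 \<and> norm (snd (D j)) \<le> 1/2"
    and "\<And>j. j < n \<Longrightarrow> norm (fst (D' j)) \<le> 1/2 \<and> norm (snd (D' j)) \<le> 1/2"
    and "\<exists>k<n. D k \<noteq> D' k \<and> (\<forall>j<n. j \<noteq> k \<longrightarrow> D j = D' j)"
    and "sel \<in> measurable (PiM Psi_all (\<lambda>_. borel)) borel"
    and "\<And>lam. (\<exists>\<beta>. \<forall>\<beta>'. noisy_objective lam \<beta>' \<le> noisy_objective lam \<beta>) \<Longrightarrow>
           (\<forall>\<beta>'. noisy_objective lam \<beta>' \<le> noisy_objective lam (sel lam))"
    and "Y \<in> sets borel"
  shows "measure (algorithm3 eps n D sel) Y \<le> exp eps * measure (algorithm3 eps n D' sel) Y"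
proof -
  obtain k where k: "k < n" "\<forall>j<n. j \<noteq> k \<longrightarrow> D j = D' j"
    using assms(5) by blast
  define b where "b = Delta_upper CARD('d) / eps"
  have b: "b > 0"
    using assms(2) unfolding b_def Delta_upper_def by (intro divide_pos_pos add_pos_pos) simp_all
  have record_norm: "norm (fst r - snd r) \<le> 1" if "norm (fst r) \<le> 1/2 \<and> norm (snd r) \<le> 1/2"
    for r :: "(real^'d) \<times> (real^'d)"
    using that norm_triangle_ineq4[of "fst r" "snd r"] by linarith
  have "(\<Sum>j<n. coef (fst (D j) - snd (D j)) c) - (\<Sum>j<n. coef (fst (D' j) - snd (D' j)) c)
      = coef (fst (D k) - snd (D k)) c - coef (fst (D' k) - snd (D' k)) c" for c
    using sum_neighbours_diff[OF k, of "\<lambda>r. coef (fst r - snd r) c"] by simp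
  then have "(\<Sum>c\<in>Psi_all. \<bar>(\<Sum>j<n. coef (fst (D j) - snd (D j)) c)
      - (\<Sum>j<n. coef (fst (D' j) - snd (D' j)) c)\<bar>) \<le> b * eps"
    using sum_abs_coef_diff_le_Delta_upper[OF record_norm record_norm, OF assms(3,4)[OF k(1)]] assms(2)
    by (simp add: b_def)
  then show ?thesis
    unfolding algorithm3_def b_def[symmetric]
    using b assms(6,8) by (intro laplace_mechanism_differentially_private) (simp_all add: Psi_all_def finite_Psi)
qed

end
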